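(* Let $m\ge1$ be an integer and $\varepsilon\ge0$. If $\max_{\ell}|\hat\beta_\ell-\beta_\ell|\le\varepsilon$, then $$\hat{\mathcal R}(m)\le\mathcal R^*(m)+\varepsilon,\qquad \max_{\bar\beta\in\mathcal B^*}|(I-\widehat\Pi_m)^{1/2}\bar\beta|\le\mathcal R^*(m)+2\varepsilon.$$ Moreover, when $m<m^*$, also $\hat{\mathcal R}(m)\ge(\mathcal R^*(m)-\varepsilon)_+$.
   Context: Let $\beta_1,\dots,\beta_L\in\mathbb R^d$ be vectors lying in an $m^*$-dimensional linear subspace of $\mathbb R^d$, and let $\hat\beta_1,\dots,\hat\beta_L\in\mathbb R^d$ be arbitrary vectors. $|\cdot|$ is the Euclidean norm, $I$ the $d\times d$ identity, $A\preceq B$ means $B-A$ is positive semidefinite, $x_+=\max(x,0)$. Let $\mathcal A_m=\{\Pi\in\mathbb R^{d\times d}:\Pi=\Pi^\top,\ 0\preceq\Pi\preceq I,\ \operatorname{tr}\Pi\le m\}$ and let $\widehat\Pi_m$ be a minimizer over $\Pi\in\mathcal A_m$ of $R(\Pi)=\max_\ell\hat\beta_\ell^\top(I-\Pi)\hat\beta_\ell$. Set $\hat{\mathcal R}(m)=\sqrt{R(\widehat\Pi_m)}=\min_{\Pi\in\mathcal A_m}\sqrt{R(\Pi)}$, $\mathcal R^*(m)=\min_{\Pi\in\mathcal A_m}\max_\ell|(I-\Pi)^{1/2}\beta_\ell|$, and $\mathcal B^*=\{\sum_{\ell=1}^Lc_\ell\beta_\ell:\sum_\ell|c_\ell|\le1\}$.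 *)

theory Defs
  imports "HOL-Analysis.Analysis"
begin

type_synonym 'n sqmat = "real^'n^'n"

definition psd :: "'n::finite sqmat \<Rightarrow> bool" where
  "psd A \<longleftrightarrow> transpose A = A \<and> (\<forall>x. 0 \<le> x \<bullet> (A *v x))"

definition loewner_le :: "'n::finite sqmat \<Rightarrow> 'n sqmat \<Rightarrow> bool" where
  "loewner_le A B \<longleftrightarrow> psd (B - A)"

definition psd_sqrt :: "'n::finite sqmat \<Rightarrow> 'n sqmat" where
  "psd_sqrt A = (THE S. psd S \<and> S ** S = A)"

definition Aset :: "nat \<Rightarrow> 'n::finite sqmat set" where
  "Aset m = {P. transpose P = P \<and> loewner_le 0 P \<and> loewner_le P (mat 1) \<and> trace P \<le> real m}"

definition Rfun :: "nat \<Rightarrow> (nat \<Rightarrow> real^'n::finite) \<Rightarrow> 'n sqmat \<Rightarrow> real" where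
  "Rfun L bh P = Max ((\<lambda>l. bh l \<bullet> ((mat 1 - P) *v bh l)) ` {1..L})"

definition Rstar :: "nat \<Rightarrow> (nat \<Rightarrow> real^'n::finite) \<Rightarrow> nat \<Rightarrow> real" where
  "Rstar L b m = Inf ((\<lambda>P. Max ((\<lambda>l. norm (psd_sqrt (mat 1 - P) *v b l)) ` {1..L})) ` Aset m)"

definition Bstar :: "nat \<Rightarrow> (nat \<Rightarrow> real^'n::finite) \<Rightarrow> (real^'n) set" where
  "Bstar L b = {(\<Sum>l\<in>{1..L}. c l *\<^sub>R b l) | c. (\<Sum>l\<in>{1..L}. \<bar>c l\<bar>) \<le> 1}"

end

(*
  Write rho_b(P) = max_l |(I - P)^(1/2) b_l|, so that the empirical objective is rho_bh(P)^2.
  For P in A_m we have 0 <= I - P <= I, hence (I - P)^(1/2) is a contraction and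
  |rho_bh(P) - rho_b(P)| <= eps uniformly in P. Comparing the minimiser Ph with an arbitrary
  P in A_m gives rho_bh(Ph) <= R*(m) + eps, and R*(m) <= rho_b(Ph) <= rho_bh(Ph) + eps gives the
  lower bound, for every m. A linear map attains its
  largest norm on the l1-hull B* at one of the points b_l, which bounds it there by
  rho_b(Ph) <= R*(m) + 2 eps.
  The square root in the definitions is only meaningful once positive semidefinite matrices
  are known to have a unique positive semidefinite square root; this is derived from the
  spectral theorem, proved by maximising the Rayleigh quotient on invariant subspaces.
*)
theory Submission imports Defs begin

section \<open>Spectral theorem and positive semidefinite square roots\<close>

lemma inner_symmetric_matrix:
  fixes M :: "real^'n::finite^'n"
  assumes "transpose M = M"
  shows "x \<bullet> (M *v y) = (M *v x) \<bullet> y"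
  by (metis assms dot_lmul_matrix transpose_matrix_vector)

lemma symmetric_matrixI:
  fixes M :: "real^'n::finite^'n"
  assumes "\<And>x y. x \<bullet> (M *v y) = (M *v x) \<bullet> y"
  shows "transpose M = M"
proof -
  have "transpose M *v y = M *v y" for y
  proof -
    have "x \<bullet> (transpose M *v y) = x \<bullet> (M *v y)" for x
      by (metis assms dot_lmul_matrix inner_commute transpose_matrix_vector)
    then have "(transpose M *v y - M *v y) \<bullet> (transpose M *v y - M *v y) = 0"
      by (simp add: inner_diff)
    then show ?thesis by simp
  qed
  then show ?thesis by (simp add: matrix_eq)
qed

lemma transpose_diff: "transpose (A - B :: 'a::ab_group_add^'n^'m) = transpose A - transpose B"
  by (simp add: transpose_def vec_eq_iff)

lemma matrix_vector_mult_mat: "(mat c :: real^'n::finite^'n) *v x = c *\<^sub>R x"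
  by (simp add: vec_eq_iff matrix_vector_mult_def mat_def if_distrib[of "\<lambda>a. a * _"] cong: if_cong)

lemma nonneg_form_null_vector:
  fixes M :: "real^'n::finite^'n"
  assumes sym: "transpose M = M" and V: "subspace V" and v: "v \<in> V" and y: "y \<in> V"
    and nonneg: "\<And>x. x \<in> V \<Longrightarrow> 0 \<le> x \<bullet> (M *v x)" and null: "v \<bullet> (M *v v) = 0"
  shows "y \<bullet> (M *v v) = 0"
proof -
  define c where "c = y \<bullet> (M *v v)"
  define d where "d = y \<bullet> (M *v y)"
  have d: "d \<ge> 0" using nonneg[OF y] by (simp add: d_def)
  have vy: "v \<bullet> (M *v y) = c"
    unfolding c_def using inner_symmetric_matrix[OF sym, of v y] by (simp add: inner_commute)
  \<comment> \<open>Along the line v + ty the form is the parabola 2tc + t^2 d, which is negative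
      somewhere unless c = 0.\<close>
  define t where "t = - c / (d + 1)"
  have "v + t *\<^sub>R y \<in> V" using V v y by (simp add: subspace_add subspace_scale)
  then have "0 \<le> (v + t *\<^sub>R y) \<bullet> (M *v (v + t *\<^sub>R y))" by (rule nonneg)
  also have "\<dots> = 2 * t * c + t\<^sup>2 * d"
    by (simp add: matrix_vector_right_distrib matrix_vector_mult_scaleR inner_add_left inner_add_right
        null vy power2_eq_square c_def[symmetric] d_def[symmetric] algebra_simps)
  finally have parabola: "0 \<le> 2 * t * c + t\<^sup>2 * d" .
  have td: "t * (d + 1) = - c" unfolding t_def using d by simp
  have "(d + 1)\<^sup>2 * (2 * t * c + t\<^sup>2 * d) = 2 * c * (d + 1) * (t * (d + 1)) + (t * (d + 1))\<^sup>2 * d"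
    by (simp add: power2_eq_square algebra_simps)
  also have "\<dots> = - (c\<^sup>2 * (d + 2))" unfolding td by (simp add: power2_eq_square algebra_simps)
  finally have "(d + 1)\<^sup>2 * (2 * t * c + t\<^sup>2 * d) = - (c\<^sup>2 * (d + 2))" .
  then have "c\<^sup>2 * (d + 2) \<le> 0"
    using parabola by (metis neg_0_le_iff_le zero_le_power2 mult_nonneg_nonneg)
  then have "c\<^sup>2 \<le> 0" using d by (simp add: mult_le_0_iff)
  then show ?thesis by (simp add: c_def)
qed

lemma symmetric_matrix_eigenvector_in_invariant_subspace:
  fixes A :: "real^'n::finite^'n"
  assumes sym: "transpose A = A" and V: "subspace V" and nontriv: "V \<noteq> {0}"
    and invariant: "\<And>x. x \<in> V \<Longrightarrow> A *v x \<in> V"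
  obtains v where "v \<in> V" "norm v = 1" "A *v v = (v \<bullet> (A *v v)) *\<^sub>R v"
proof -
  let ?K = "sphere 0 1 \<inter> V"
  have K: "compact ?K" using closed_subspace[OF V] by (intro compact_Int_closed) auto
  obtain x where x: "x \<in> V" "x \<noteq> 0" using nontriv subspace_0[OF V] by blast
  then have "x /\<^sub>R norm x \<in> ?K" using V by (simp add: subspace_scale)
  then have "?K \<noteq> {}" by blast
  moreover have "continuous_on ?K (\<lambda>x. x \<bullet> (A *v x))"
    by (intro continuous_intros linear_continuous_on matrix_vector_mul_bounded_linear)
  \<comment> \<open>For a maximiser v of the Rayleigh quotient on V, M = lI - A is positive semidefinite
      on V and v'Mv = 0, hence Mv = 0.\<close>
  ultimately obtain v where v: "v \<in> V" "norm v = 1"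
    and vmax: "\<And>y. y \<in> ?K \<Longrightarrow> y \<bullet> (A *v y) \<le> v \<bullet> (A *v v)"
    using continuous_attains_sup[OF K] by fastforce
  define l where "l = v \<bullet> (A *v v)"
  define M where "M = mat l - A"
  have Mv: "M *v y = l *\<^sub>R y - A *v y" for y
    by (simp add: M_def matrix_vector_mult_diff_rdistrib matrix_vector_mult_mat)
  have nonneg: "0 \<le> y \<bullet> (M *v y)" if y: "y \<in> V" for y
  proof (cases "y = 0")
    case False
    then have "y /\<^sub>R norm y \<in> ?K" using y V by (simp add: subspace_scale)
    then have "(y /\<^sub>R norm y) \<bullet> (A *v (y /\<^sub>R norm y)) \<le> l" unfolding l_def by (rule vmax)
    then have "y \<bullet> (A *v y) / (norm y)\<^sup>2 \<le> l"
      by (simp add: matrix_vector_mult_scaleR power2_eq_square divide_inverse mult_ac)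
    then have "y \<bullet> (A *v y) \<le> l * (norm y)\<^sup>2" using False by (simp add: divide_le_eq)
    then show ?thesis by (simp add: Mv inner_diff_right power2_norm_eq_inner)
  qed simp
  have "(M *v v) \<bullet> (M *v v) = 0"
  proof (rule nonneg_form_null_vector[OF _ V v(1) _ nonneg])
    show "transpose M = M" using sym by (simp add: M_def transpose_diff)
    show "M *v v \<in> V" using v invariant V by (simp add: Mv subspace_diff subspace_scale)
    show "v \<bullet> (M *v v) = 0"
      using v by (simp add: Mv inner_diff_right l_def power2_norm_eq_inner[symmetric])
  qed
  then have "A *v v = l *\<^sub>R v" by (simp add: Mv)
  then show ?thesis using that v l_def by blast
qed

lemma symmetric_matrix_orthonormal_eigenbasis_subspace:
  fixes A :: "real^'n::finite^'n"
  assumes sym: "transpose A = A"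
  shows "subspace V \<Longrightarrow> (\<forall>x\<in>V. A *v x \<in> V) \<Longrightarrow>
    \<exists>B. B \<subseteq> V \<and> finite B \<and> pairwise orthogonal B \<and>
        (\<forall>u\<in>B. norm u = 1 \<and> A *v u = (u \<bullet> (A *v u)) *\<^sub>R u) \<and> V \<subseteq> span B"
proof (induction "dim V" arbitrary: V rule: less_induct)
  case less
  note V = less.prems(1) and invariant = less.prems(2)
  show ?case
  proof (cases "V = {0}")
    case True
    then show ?thesis by (intro exI[of _ "{}"]) auto
  next
    case False
    obtain v where vV: "v \<in> V" and vn: "norm v = 1" and Av: "A *v v = (v \<bullet> (A *v v)) *\<^sub>R v"
      using symmetric_matrix_eigenvector_in_invariant_subspace[OF sym V False] invariant by blast
    define W where "W = V \<inter> {x. orthogonal v x}"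
    have W: "subspace W" unfolding W_def by (intro subspace_inter V subspace_orthogonal_to_vector)
    have invariantW: "\<forall>x\<in>W. A *v x \<in> W"
    proof
      fix x assume x: "x \<in> W"
      have "v \<bullet> (A *v x) = (A *v v) \<bullet> x" by (rule inner_symmetric_matrix[OF sym])
      also have "\<dots> = 0" using x by (subst Av) (simp add: W_def orthogonal_def)
      finally show "A *v x \<in> W" using x invariant by (simp add: W_def orthogonal_def)
    qed
    have "v \<notin> W" using vn by (auto simp: W_def orthogonal_def)
    then have "W \<subset> V" using vV by (auto simp: W_def)
    then have "dim W < dim V" using W V by (metis dim_psubset span_eq_iff)
    then obtain B where B: "B \<subseteq> W" "finite B" "pairwise orthogonal B"
        "\<forall>u\<in>B. norm u = 1 \<and> A *v u = (u \<bullet> (A *v u)) *\<^sub>R u" "W \<subseteq> span B"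
      using less.hyps[OF _ W invariantW] by blast
    show ?thesis
    proof (intro exI[of _ "insert v B"] conjI)
      show "insert v B \<subseteq> V" "finite (insert v B)" using B(1,2) vV by (auto simp: W_def)
      show "pairwise orthogonal (insert v B)"
        using B(1,3) \<open>v \<notin> W\<close> unfolding pairwise_insert
        by (auto simp: W_def orthogonal_def inner_commute)
      show "\<forall>u\<in>insert v B. norm u = 1 \<and> A *v u = (u \<bullet> (A *v u)) *\<^sub>R u"
        using B(4) vn Av by auto
      show "V \<subseteq> span (insert v B)"
      proof
        fix x assume x: "x \<in> V"
        have "x - (v \<bullet> x) *\<^sub>R v \<in> W"
          using x vV V vn by (simp add: W_def orthogonal_def subspace_diff subspace_scale
              inner_diff_right power2_norm_eq_inner[symmetric])
        then show "x \<in> span (insert v B)" using B(5) by (auto simp: span_breakdown_eq)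
      qed
    qed
  qed
qed

lemma symmetric_matrix_orthonormal_eigenbasis:
  fixes A :: "real^'n::finite^'n"
  assumes "transpose A = A"
  obtains B where "finite B" "pairwise orthogonal B"
    "\<And>u. u \<in> B \<Longrightarrow> norm u = 1" "\<And>u. u \<in> B \<Longrightarrow> A *v u = (u \<bullet> (A *v u)) *\<^sub>R u"
    "\<And>x. x \<in> span B"
  using symmetric_matrix_orthonormal_eigenbasis_subspace[OF assms, of UNIV] by auto

lemma psd_square_root_exists:
  fixes A :: "real^'n::finite^'n"
  assumes "psd A"
  obtains S where "psd S" "S ** S = A"
proof -
  have sym: "transpose A = A" and nonneg: "\<And>x. 0 \<le> x \<bullet> (A *v x)"
    using assms by (auto simp: psd_def)
  obtain B where B: "finite B" "pairwise orthogonal B"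
    "\<And>u. u \<in> B \<Longrightarrow> norm u = 1" "\<And>u. u \<in> B \<Longrightarrow> A *v u = (u \<bullet> (A *v u)) *\<^sub>R u"
    "\<And>x. x \<in> span B"
    using symmetric_matrix_orthonormal_eigenbasis[OF sym] by metis
  define eigval where "eigval u = u \<bullet> (A *v u)" for u
  define f where "f x = (\<Sum>u\<in>B. (sqrt (eigval u) * (u \<bullet> x)) *\<^sub>R u)" for x
  have "linear f"
    unfolding linear_iff f_def
    by (simp add: inner_add_right distrib_left scaleR_add_left sum.distrib scaleR_sum_right mult.left_commute)
  define S where "S = matrix f"
  have Sv: "S *v x = f x" for x
    unfolding S_def by (simp add: \<open>linear f\<close>)
  have orthonormal: "w \<bullet> u = (if w = u then 1 else 0)" if "w \<in> B" "u \<in> B" for w u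
    using B(2,3) that by (auto simp: pairwise_def orthogonal_def power2_norm_eq_inner[symmetric])
  have f_eigen: "f u = sqrt (eigval u) *\<^sub>R u" if u: "u \<in> B" for u
  proof -
    have "f u = (\<Sum>w\<in>B. if w = u then sqrt (eigval u) *\<^sub>R u else 0)"
      unfolding f_def by (rule sum.cong) (auto simp: orthonormal u)
    then show ?thesis using B(1) u by simp
  qed
  have "(f \<circ> f) x = A *v x" for x
  proof (rule linear_eq_on_span[OF linear_compose[OF \<open>linear f\<close> \<open>linear f\<close>] _ _ B(5)])
    fix u assume u: "u \<in> B"
    have "(f \<circ> f) u = sqrt (eigval u) *\<^sub>R f u" using u by (simp add: f_eigen linear_cmul[OF \<open>linear f\<close>])
    also have "\<dots> = eigval u *\<^sub>R u" using u nonneg by (simp add: f_eigen eigval_def)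
    also have "\<dots> = A *v u" using B(4)[OF u] by (simp add: eigval_def)
    finally show "(f \<circ> f) u = A *v u" .
  qed simp
  then have "S ** S = A" by (simp add: matrix_eq Sv matrix_vector_mul_assoc[symmetric])
  moreover have "transpose S = S"
    by (rule symmetric_matrixI) (simp add: Sv f_def inner_sum_right inner_sum_left mult_ac inner_commute)
  moreover have "0 \<le> x \<bullet> (S *v x)" for x
    by (simp add: Sv f_def inner_sum_right inner_commute eigval_def nonneg sum_nonneg mult.assoc)
  ultimately show ?thesis using that by (auto simp: psd_def)
qed

lemma psd_null_vector:
  fixes S :: "real^'n::finite^'n"
  assumes "psd S" "u \<bullet> (S *v u) = 0"
  shows "S *v u = 0"
proof -
  have "(S *v u) \<bullet> (S *v u) = 0"
    by (rule nonneg_form_null_vector[of S UNIV]) (use assms in \<open>auto simp: psd_def\<close>)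
  then show ?thesis by simp
qed

lemma psd_square_root_unique:
  fixes S T :: "real^'n::finite^'n"
  assumes S: "psd S" and T: "psd T" and eq: "S ** S = T ** T"
  shows "S = T"
proof -
  define D where "D = S - T"
  have "transpose D = D" using S T by (simp add: D_def transpose_diff psd_def)
  then obtain B where B: "\<And>u. u \<in> B \<Longrightarrow> D *v u = (u \<bullet> (D *v u)) *\<^sub>R u" "\<And>x. x \<in> span B"
    using symmetric_matrix_orthonormal_eigenbasis by metis
  have "D *v u = 0" if u: "u \<in> B" for u
  proof -
    define \<mu> where "\<mu> = u \<bullet> (D *v u)"
    have Du: "D *v u = \<mu> *\<^sub>R u" using B(1)[OF u] by (simp add: \<mu>_def)
    \<comment> \<open>S^2 - T^2 = S D + D T; testing it against the eigenvector u of D gives \<mu> (u'Su + u'Tu) = 0.\<close>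
    have "S *v (D *v u) + D *v (T *v u) = S *v (S *v u) - T *v (T *v u)"
      by (simp add: D_def matrix_vector_mult_diff_distrib matrix_vector_mult_diff_rdistrib)
    also have "\<dots> = 0" using eq by (simp add: matrix_vector_mul_assoc)
    finally have "u \<bullet> (S *v (D *v u)) + u \<bullet> (D *v (T *v u)) = 0"
      by (metis inner_add_right inner_zero_right)
    moreover have "u \<bullet> (D *v (T *v u)) = (D *v u) \<bullet> (T *v u)"
      by (rule inner_symmetric_matrix[OF \<open>transpose D = D\<close>])
    ultimately have "\<mu> * (u \<bullet> (S *v u) + u \<bullet> (T *v u)) = 0"
      by (simp add: Du matrix_vector_mult_scaleR distrib_left inner_commute)
    moreover have "0 \<le> u \<bullet> (S *v u)" "0 \<le> u \<bullet> (T *v u)" using S T by (auto simp: psd_def)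
    ultimately consider "\<mu> = 0" | "u \<bullet> (S *v u) = 0" "u \<bullet> (T *v u) = 0"
      unfolding mult_eq_0_iff by linarith
    then show ?thesis
    proof cases
      case 2
      then have "S *v u = 0" "T *v u = 0" using psd_null_vector S T by auto
      then show ?thesis by (simp add: D_def matrix_vector_mult_diff_rdistrib)
    qed (simp add: Du)
  qed
  then have "D *v x = 0 *v x" for x
    using linear_eq_on_span[of "(*v) D" "(*v) 0" B, OF _ _ _ B(2)] by simp
  then show ?thesis by (simp add: D_def matrix_eq matrix_vector_mult_diff_rdistrib)
qed

lemma psd_sqrt:
  fixes A :: "real^'n::finite^'n"
  assumes "psd A"
  shows "psd (psd_sqrt A)" "psd_sqrt A ** psd_sqrt A = A"
proof -
  obtain S where S: "psd S" "S ** S = A" using psd_square_root_exists[OF assms] .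
  have "\<exists>!S. psd S \<and> S ** S = A"
    using S psd_square_root_unique by (metis (lifting))
  then have "psd (psd_sqrt A) \<and> psd_sqrt A ** psd_sqrt A = A"
    unfolding psd_sqrt_def by (rule theI')
  then show "psd (psd_sqrt A)" "psd_sqrt A ** psd_sqrt A = A" by auto
qed

section \<open>Perturbation bounds for the relaxed subspace fit\<close>

lemma zero_in_Aset: "0 \<in> Aset m"
proof -
  have "transpose (0::'n::finite sqmat) = 0" by (simp add: transpose_def vec_eq_iff)
  then show ?thesis by (simp add: Aset_def loewner_le_def psd_def trace_def)
qed

lemma Aset_quadratic_form:
  assumes "P \<in> Aset m"
  shows "x \<bullet> ((mat 1 - P) *v x) = (norm (psd_sqrt (mat 1 - P) *v x))\<^sup>2"
proof -
  let ?S = "psd_sqrt (mat 1 - P)"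
  have "psd (mat 1 - P)" using assms by (simp add: Aset_def loewner_le_def)
  note S = psd_sqrt[OF this]
  have "(norm (?S *v x))\<^sup>2 = x \<bullet> (?S *v (?S *v x))"
    using S(1) by (simp add: psd_def power2_norm_eq_inner inner_symmetric_matrix)
  also have "\<dots> = x \<bullet> ((mat 1 - P) *v x)" by (simp add: matrix_vector_mul_assoc S(2))
  finally show ?thesis by simp
qed

lemma Aset_norm_psd_sqrt_le:
  assumes "P \<in> Aset m"
  shows "norm (psd_sqrt (mat 1 - P) *v x) \<le> norm x"
proof -
  have "psd P" using assms by (simp add: Aset_def loewner_le_def)
  then have "x \<bullet> ((mat 1 - P) *v x) \<le> (norm x)\<^sup>2"
    by (simp add: psd_def matrix_vector_mult_diff_rdistrib inner_diff_right power2_norm_eq_inner)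
  then show ?thesis
    using Aset_quadratic_form[OF assms] by (simp add: power2_le_iff_abs_le)
qed

definition worst_residual :: "nat \<Rightarrow> (nat \<Rightarrow> real^'n::finite) \<Rightarrow> 'n sqmat \<Rightarrow> real" where
  "worst_residual L b P = Max ((\<lambda>l. norm (psd_sqrt (mat 1 - P) *v b l)) ` {1..L})"

lemma worst_residual_ge:
  "l \<in> {1..L} \<Longrightarrow> norm (psd_sqrt (mat 1 - P) *v b l) \<le> worst_residual L b P"
  unfolding worst_residual_def by (rule Max_ge) auto

lemma worst_residual_nonneg: "L \<ge> 1 \<Longrightarrow> 0 \<le> worst_residual L b P"
  by (rule order_trans[OF norm_ge_zero worst_residual_ge[of 1]]) simp

lemma sqrt_Rfun_eq_worst_residual:
  assumes "L \<ge> 1" "P \<in> Aset m"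
  shows "sqrt (Rfun L b P) = worst_residual L b P"
proof -
  have "sqrt (Rfun L b P) = Max (sqrt ` (\<lambda>l. (norm (psd_sqrt (mat 1 - P) *v b l))\<^sup>2) ` {1..L})"
    unfolding Rfun_def Aset_quadratic_form[OF assms(2)]
    using assms(1) by (intro mono_Max_commute) (auto simp: mono_def)
  then show ?thesis by (simp add: image_image worst_residual_def)
qed

lemma worst_residual_perturb:
  assumes "L \<ge> 1" "P \<in> Aset m" "\<forall>l\<in>{1..L}. norm (x l - y l) \<le> \<epsilon>"
  shows "worst_residual L x P \<le> worst_residual L y P + \<epsilon>"
proof -
  let ?S = "psd_sqrt (mat 1 - P)"
  have "norm (?S *v x l) \<le> worst_residual L y P + \<epsilon>" if l: "l \<in> {1..L}" for l
  proof -
    have "norm (?S *v x l) \<le> norm (?S *v y l) + norm (?S *v (x l - y l))"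
      by (metis matrix_vector_mult_diff_distrib norm_triangle_sub)
    also have "\<dots> \<le> worst_residual L y P + norm (x l - y l)"
      by (intro add_mono worst_residual_ge[OF l] Aset_norm_psd_sqrt_le[OF assms(2)])
    moreover have "norm (x l - y l) \<le> \<epsilon>" using assms(3) l by blast
    ultimately show ?thesis by linarith
  qed
  then show ?thesis
    unfolding worst_residual_def[of L x] using assms(1) by (intro Max.boundedI) auto
qed

lemma Rstar_eq_Inf_worst_residual: "Rstar L b m = Inf (worst_residual L b ` Aset m)"
  by (simp add: Rstar_def worst_residual_def)

lemma Rstar_le_worst_residual:
  assumes "L \<ge> 1" "P \<in> Aset m"
  shows "Rstar L b m \<le> worst_residual L b P"
  unfolding Rstar_eq_Inf_worst_residual
  by (rule cINF_lower[OF bdd_belowI2[where m = 0] assms(2)]) (rule worst_residual_nonneg[OF assms(1)])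

lemma le_Rstar:
  assumes "\<And>P. P \<in> Aset m \<Longrightarrow> c \<le> worst_residual L b P"
  shows "c \<le> Rstar L b m"
  unfolding Rstar_eq_Inf_worst_residual by (rule cINF_greatest) (use zero_in_Aset assms in auto)

lemma norm_linear_Bstar_le:
  assumes "linear f" "L \<ge> 1" "bb \<in> Bstar L b"
  shows "norm (f bb) \<le> Max ((\<lambda>l. norm (f (b l))) ` {1..L})"
proof -
  let ?M = "Max ((\<lambda>l. norm (f (b l))) ` {1..L})"
  obtain c where c: "bb = (\<Sum>l\<in>{1..L}. c l *\<^sub>R b l)" "(\<Sum>l\<in>{1..L}. \<bar>c l\<bar>) \<le> 1"
    using assms(3) unfolding Bstar_def by blast
  have "norm (f (b 1)) \<le> ?M" using assms(2) by (intro Max_ge) auto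
  then have "0 \<le> ?M" using norm_ge_zero order_trans by blast
  have "norm (f bb) = norm (\<Sum>l\<in>{1..L}. c l *\<^sub>R f (b l))"
    by (simp add: c(1) linear_sum[OF assms(1)] linear_cmul[OF assms(1)])
  also have "\<dots> \<le> (\<Sum>l\<in>{1..L}. \<bar>c l\<bar> * norm (f (b l)))"
    using norm_sum[of "\<lambda>l. c l *\<^sub>R f (b l)" "{1..L}"] by simp
  also have "\<dots> \<le> (\<Sum>l\<in>{1..L}. \<bar>c l\<bar> * ?M)"
    by (intro sum_mono mult_left_mono) auto
  also have "\<dots> \<le> ?M"
    using c(2) \<open>0 \<le> ?M\<close> by (simp add: sum_distrib_right[symmetric] mult_left_le_one_le)
  finally show ?thesis .
qed

theorem proposition4:
  fixes L m mstar :: nat and \<epsilon> :: real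
    and b bh :: "nat \<Rightarrow> real^'n::finite" and Ph :: "'n sqmat"
  assumes L: "L \<ge> 1"
    and sub: "\<exists>S. subspace S \<and> dim S = mstar \<and> (\<forall>l\<in>{1..L}. b l \<in> S)"
    and m: "m \<ge> 1" and eps: "\<epsilon> \<ge> 0"
    and Ph_mem: "Ph \<in> Aset m"
    and Ph_min: "\<forall>P\<in>Aset m. Rfun L bh Ph \<le> Rfun L bh P"
    and close: "Max ((\<lambda>l. norm (bh l - b l)) ` {1..L}) \<le> \<epsilon>"
  shows "sqrt (Rfun L bh Ph) \<le> Rstar L b m + \<epsilon>
         \<and> (\<forall>bb\<in>Bstar L b. norm (psd_sqrt (mat 1 - Ph) *v bb) \<le> Rstar L b m + 2 * \<epsilon>)
         \<and> (m < mstar \<longrightarrow> sqrt (Rfun L bh Ph) \<ge> max (Rstar L b m - \<epsilon>) 0)"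
proof -
  let ?F = "worst_residual L b" and ?G = "worst_residual L bh"
  have near: "\<forall>l\<in>{1..L}. norm (bh l - b l) \<le> \<epsilon>"
    using close L by (simp add: Max_le_iff)
  then have near': "\<forall>l\<in>{1..L}. norm (b l - bh l) \<le> \<epsilon>"
    by (simp add: norm_minus_commute)
  have sqrt_R: "sqrt (Rfun L bh Ph) = ?G Ph"
    by (rule sqrt_Rfun_eq_worst_residual[OF L Ph_mem])
  have upper: "?G Ph - \<epsilon> \<le> Rstar L b m"
  proof (rule le_Rstar)
    fix P :: "'n sqmat" assume P: "P \<in> Aset m"
    have "?G Ph \<le> ?G P"
      using Ph_min P by (simp add: sqrt_R[symmetric] sqrt_Rfun_eq_worst_residual[OF L P, symmetric])
    also have "\<dots> \<le> ?F P + \<epsilon>" by (rule worst_residual_perturb[OF L P near])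
    finally show "?G Ph - \<epsilon> \<le> ?F P" by simp
  qed
  have lower: "Rstar L b m \<le> ?F Ph" and F_Ph: "?F Ph \<le> ?G Ph + \<epsilon>"
    by (rule Rstar_le_worst_residual[OF L Ph_mem], rule worst_residual_perturb[OF L Ph_mem near'])
  have "norm (psd_sqrt (mat 1 - Ph) *v bb) \<le> ?F Ph" if "bb \<in> Bstar L b" for bb
    unfolding worst_residual_def by (rule norm_linear_Bstar_le[OF _ L that]) simp
  then show ?thesis
    using upper lower F_Ph sqrt_R worst_residual_nonneg[OF L, of bh Ph] by fastforce
qed

end
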